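(* Let $T>0$, $\alpha\in(0,1)$ and $2\le p<\infty$. Let $\varphi$ be a continuous bounded function on $[0,T]$ into $\mathbb{R}$. Then, for $t\in(0,T)$, $$ {}^{\mathcal{ABC}}\mathcal{D}^{\alpha}_{t}\bigl[\Phi_p(\varphi(t))\bigr]\cdot \varphi(t)\;\ge\;\frac{p-1}{p}\,{}^{\mathcal{ABC}}\mathcal{D}^{\alpha}_{t}\bigl(\Phi_p(\varphi(t))\,\varphi(t)\bigr).$$
   Context: $\Phi_p:\mathbb{R}\to\mathbb{R}$ is $\Phi_p(w)=|w|^{p-2}w$. The Mittag-Leffler function is $E_{\alpha,\beta}(\omega)=\sum_{k\ge0}\omega^k/\Gamma(\alpha k+\beta)$, $E_\alpha=E_{\alpha,1}$. Set $B(\alpha)=(1-\alpha)+\frac{\alpha}{\Gamma(\alpha)}$ and $\gamma=\frac{\alpha}{1-\alpha}$. For $f\in H^1(0,T)$ and $t\in(0,T)$, the Atangana–Baleanu–Caputo derivative with base point $0$ is ${}^{\mathcal{ABC}}\mathcal{D}^{\alpha}_{t}f(t)=\frac{B(\alpha)}{1-\alpha}\int_0^t f'(y)\,E_\alpha[-\gamma(t-y)^\alpha]\,dy$ (the functions to which this derivative is applied are assumed to be such that it is defined, i.e. in $H^1(0,T)$). *)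

theory Defs
  imports "HOL-Analysis.Analysis"
begin

definition Phi_p :: "real \<Rightarrow> real \<Rightarrow> real" where
  "Phi_p p w = \<bar>w\<bar> powr (p - 2) * w"

definition mittag_leffler :: "real \<Rightarrow> real \<Rightarrow> real \<Rightarrow> real" where
  "mittag_leffler a b z = (\<Sum>k. z ^ k / Gamma (a * real k + b))"

definition B_norm :: "real \<Rightarrow> real" where
  "B_norm a = (1 - a) + a / Gamma a"

definition gamma_par :: "real \<Rightarrow> real" where
  "gamma_par a = a / (1 - a)"

text \<open>g is the (weak) derivative of f in H^1(0,T): g is square integrable on (0,T)
  and f is (the continuous representative) f(t) = f(0) + int_0^t g.\<close>
definition H1_deriv :: "real \<Rightarrow> (real \<Rightarrow> real) \<Rightarrow> (real \<Rightarrow> real) \<Rightarrow> bool" where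
  "H1_deriv T f g \<longleftrightarrow> g absolutely_integrable_on {0..T} \<and>
     (\<lambda>x. (g x)\<^sup>2) integrable_on {0..T} \<and>
     (\<forall>t\<in>{0..T}. f t = f 0 + integral {0..t} g)"

definition in_H1 :: "real \<Rightarrow> (real \<Rightarrow> real) \<Rightarrow> bool" where
  "in_H1 T f \<longleftrightarrow> (\<exists>g. H1_deriv T f g)"

text \<open>ABC derivative with base point 0 (the value does not depend on the a.e. choice of f').\<close>
definition ABC_deriv :: "real \<Rightarrow> real \<Rightarrow> (real \<Rightarrow> real) \<Rightarrow> real \<Rightarrow> real" where
  "ABC_deriv T a f t =
     (let g = (SOME g. H1_deriv T f g) in
      B_norm a / (1 - a) *
        integral {0..t} (\<lambda>y. g y * mittag_leffler a 1 (- gamma_par a * (t - y) powr a)))"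

end

theory Submission
  imports Defs
begin

text \<open>
  The ABC derivative integrates f' against the kernel W(y) = E_\<alpha>(-\<gamma> (t - y)^\<alpha>), which is
  nonnegative and nondecreasing on [0, t] because x \<mapsto> E_\<alpha>(-x) is nonnegative and
  nonincreasing on [0, \<infinity>) for 0 < \<alpha> \<le> 1. Up to a positive factor, the difference of the two
  sides is the integral of W F' over [0, t], where F(y) = (p-1)/p |\<phi>(y)|^p - \<phi>(t) \<Phi>_p(\<phi>(y)).
  By Young's inequality F is minimal at y = t, and Bonnet's second mean value theorem turns this
  into \<integral>_0^t W F' \<le> 0.

  For E_\<alpha>(-x) put d_n(k) = (\<alpha>k+1)_n / (k+1)_n (Pochhammer symbols) and
  g_n(y) = \<Sum>_k d_n(k) (-y)^k / k!. Then g_0(y) = exp(-y) and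
  g_{n+1}(y) = \<alpha> g_n(y) + (1-\<alpha>) \<integral>_0^1 (n+1) u^n g_n(u y) du, so by induction every g_n is
  nonnegative and nonincreasing on [0, \<infinity>). By Gauss's product formula for \<Gamma> the rescaled
  coefficients (n+1)^((1-\<alpha>) k) d_{n+1}(k) increase to k! / \<Gamma>(\<alpha>k+1), so Tannery's theorem gives
  g_{n+1}((n+1)^(1-\<alpha>) x) \<longrightarrow> E_\<alpha>(-x).
\<close>

section \<open>Exponential series with bounded weights\<close>

definition exp_series_weighted :: "(nat \<Rightarrow> real) \<Rightarrow> real \<Rightarrow> real" where
  "exp_series_weighted c y = (\<Sum>k. (- y) ^ k * c k / fact k)"

lemma summable_exp_series_weighted:
  fixes c :: "nat \<Rightarrow> real" and y :: real
  assumes "\<And>k. \<bar>c k\<bar> \<le> 1"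
  shows "summable (\<lambda>k. (- y) ^ k * c k / fact k)"
proof (rule summable_comparison_test')
  show "summable (\<lambda>k. \<bar>y\<bar> ^ k / fact k)"
    using summable_exp[of "\<bar>y\<bar>"] by (simp add: divide_inverse mult.commute)
  show "norm ((- y) ^ k * c k / fact k) \<le> \<bar>y\<bar> ^ k / fact k" for k
    using assms by (auto simp: abs_mult power_abs intro!: divide_right_mono mult_left_le)
qed

lemma exp_series_weighted_one: "exp_series_weighted (\<lambda>_. 1) y = exp (- y)"
  unfolding exp_series_weighted_def exp_def by (simp add: divide_inverse ac_simps)

lemma exp_series_weighted_lincomb:
  assumes "\<And>k. \<bar>c k\<bar> \<le> 1" "\<And>k. \<bar>d k\<bar> \<le> 1"
  shows "exp_series_weighted (\<lambda>k. r * c k + s * d k) y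
         = r * exp_series_weighted c y + s * exp_series_weighted d y"
proof -
  have sc: "summable (\<lambda>k. (- y) ^ k * c k / fact k)"
    and sd: "summable (\<lambda>k. (- y) ^ k * d k / fact k)"
    using assms by (auto intro: summable_exp_series_weighted)
  have "exp_series_weighted (\<lambda>k. r * c k + s * d k) y
        = (\<Sum>k. r * ((- y) ^ k * c k / fact k) + s * ((- y) ^ k * d k / fact k))"
    unfolding exp_series_weighted_def by (simp add: add_divide_distrib algebra_simps)
  also have "\<dots> = r * (\<Sum>k. (- y) ^ k * c k / fact k) + s * (\<Sum>k. (- y) ^ k * d k / fact k)"
    by (simp only: suminf_add[OF summable_mult[OF sc] summable_mult[OF sd], symmetric]
        suminf_mult[OF sc] suminf_mult[OF sd])
  finally show ?thesis unfolding exp_series_weighted_def .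
qed

lemma abs_sum_exp_series_weighted_le:
  fixes c :: "nat \<Rightarrow> real" and x :: real
  assumes "\<And>k. \<bar>c k\<bar> \<le> 1"
  shows "\<bar>\<Sum>k<N. (- x) ^ k * c k / fact k\<bar> \<le> exp \<bar>x\<bar>"
proof -
  have "\<bar>\<Sum>k<N. (- x) ^ k * c k / fact k\<bar> \<le> (\<Sum>k<N. \<bar>x\<bar> ^ k / fact k)"
    by (rule order_trans[OF sum_abs])
      (auto intro!: sum_mono divide_right_mono mult_left_le simp: abs_mult power_abs assms)
  also have "\<dots> \<le> (\<Sum>k. \<bar>x\<bar> ^ k / fact k)"
    using summable_exp[of "\<bar>x\<bar>"] by (intro sum_le_suminf) (auto simp: divide_inverse mult.commute)
  also have "\<dots> = exp \<bar>x\<bar>"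
    by (simp add: exp_def divide_inverse mult.commute)
  finally show ?thesis .
qed

lemma has_integral_power_unit_interval: "((\<lambda>u::real. u ^ n) has_integral 1 / (real n + 1)) {0..1}"
proof -
  have "((\<lambda>u::real. u ^ n) has_integral (1 ^ Suc n / (real n + 1) - 0 ^ Suc n / (real n + 1))) {0..1}"
  proof (rule fundamental_theorem_of_calculus)
    fix x :: real
    have "((\<lambda>u. u ^ Suc n / (real n + 1)) has_real_derivative x ^ n) (at x)"
      using DERIV_cdivide[OF DERIV_pow[of "Suc n" x], of "real n + 1"] by (simp add: add.commute)
    then show "((\<lambda>u. u ^ Suc n / (real n + 1)) has_vector_derivative x ^ n) (at x within {0..1})"
      by (simp add: has_real_derivative_iff_has_vector_derivative has_vector_derivative_at_within)
  qed simp
  then show ?thesis by simp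
qed

lemma has_integral_exp_series_weighted:
  fixes c :: "nat \<Rightarrow> real" and y :: real
  assumes c: "\<And>k. \<bar>c k\<bar> \<le> 1"
  shows "((\<lambda>u. real (Suc n) * u ^ n * exp_series_weighted c (u * y)) has_integral
          exp_series_weighted (\<lambda>k. c k * (real (Suc n) / (real k + real (Suc n)))) y) {0..1}"
  unfolding exp_series_weighted_def
proof (rule has_integral_dominated_convergence)
  define f where "f N u = real (Suc n) * u ^ n * (\<Sum>k<N. (- (u * y)) ^ k * c k / fact k)" for N u
  define Y where "Y N = (\<Sum>k<N. (- y) ^ k * (c k * (real (Suc n) / (real k + real (Suc n)))) / fact k)"
    for N
  show "(f N has_integral Y N) {0..1}" for N
  proof -
    have "(- (u * y)) ^ k = u ^ k * (- y) ^ k" for u k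
      by (metis mult_minus_right power_mult_distrib)
    then have "f N = (\<lambda>u. \<Sum>k<N. ((- y) ^ k * c k / fact k * real (Suc n)) * u ^ (n + k))"
      unfolding f_def by (simp add: fun_eq_iff sum_distrib_left power_add algebra_simps)
    moreover have "((\<lambda>u. \<Sum>k<N. ((- y) ^ k * c k / fact k * real (Suc n)) * u ^ (n + k)) has_integral
          (\<Sum>k<N. ((- y) ^ k * c k / fact k * real (Suc n)) * (1 / (real (n + k) + 1)))) {0..1}"
      by (intro has_integral_sum has_integral_mult_right has_integral_power_unit_interval) auto
    ultimately show ?thesis
      unfolding Y_def by (simp add: add_ac mult_ac)
  qed
  show "(\<lambda>u::real. real (Suc n) * exp \<bar>y\<bar>) integrable_on {0..1}"
    by (rule integrable_continuous_interval) (intro continuous_intros)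
  show "\<forall>u\<in>{0..1}. norm (f N u) \<le> real (Suc n) * exp \<bar>y\<bar>" for N
  proof
    fix u :: real assume u: "u \<in> {0..1}"
    have "\<bar>\<Sum>k<N. (- (u * y)) ^ k * c k / fact k\<bar> \<le> exp \<bar>u * y\<bar>"
      by (rule abs_sum_exp_series_weighted_le[OF c])
    also have "\<dots> \<le> exp \<bar>y\<bar>"
      using u by (auto simp: abs_mult intro!: mult_left_le_one_le)
    finally have "\<bar>u ^ n\<bar> * \<bar>\<Sum>k<N. (- (u * y)) ^ k * c k / fact k\<bar> \<le> 1 * exp \<bar>y\<bar>"
      using u by (intro mult_mono) (auto simp: power_le_one)
    then show "norm (f N u) \<le> real (Suc n) * exp \<bar>y\<bar>"
      unfolding f_def by (simp add: abs_mult mult.assoc del: of_nat_Suc)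
  qed
  show "\<forall>u\<in>{0..1}. (\<lambda>N. f N u) \<longlonglongrightarrow> real (Suc n) * u ^ n * (\<Sum>k. (- (u * y)) ^ k * c k / fact k)"
    unfolding f_def by (intro ballI tendsto_mult_left summable_LIMSEQ summable_exp_series_weighted c)
  have "\<bar>c k * (real (Suc n) / (real k + real (Suc n)))\<bar> \<le> 1 * 1" for k
    unfolding abs_mult by (intro mult_mono c) auto
  then show "Y \<longlonglongrightarrow> (\<Sum>k. (- y) ^ k * (c k * (real (Suc n) / (real k + real (Suc n)))) / fact k)"
    unfolding Y_def by (intro summable_LIMSEQ summable_exp_series_weighted) simp
qed

lemma tendsto_exp_series_weighted:
  fixes c :: "nat \<Rightarrow> nat \<Rightarrow> real" and x :: real
  assumes "\<And>k. (\<lambda>n. c n k) \<longlonglongrightarrow> b k" and "\<And>n k. \<bar>c n k\<bar> \<le> b k"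
    and "summable (\<lambda>k. \<bar>x\<bar> ^ k * b k / fact k)"
  shows "(\<lambda>n. exp_series_weighted (c n) x) \<longlonglongrightarrow> exp_series_weighted b x"
  unfolding exp_series_weighted_def
proof (rule tannerys_theorem[THEN conjunct2, THEN conjunct2])
  show "(\<lambda>n. (- x) ^ k * c n k / fact k) \<longlonglongrightarrow> (- x) ^ k * b k / fact k" for k
    by (intro tendsto_intros assms(1)) simp
  show "eventually (\<lambda>(k, n). norm ((- x) ^ k * c n k / fact k) \<le> \<bar>x\<bar> ^ k * b k / fact k)
          (at_top \<times>\<^sub>F sequentially)"
    using assms(2) by (intro always_eventually)
      (auto simp: abs_mult power_abs intro!: divide_right_mono mult_left_mono)
qed (use assms(3) in auto)

section \<open>The Mittag-Leffler function on the negative half-line\<close>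

lemma eventually_power_Suc_le_fact:
  fixes z :: real
  assumes "1 \<le> z"
  shows "eventually (\<lambda>m. z ^ Suc m \<le> fact m) sequentially"
proof -
  have "(\<lambda>m. inverse (fact m) * z ^ m) \<longlonglongrightarrow> 0"
    by (rule summable_LIMSEQ_zero[OF summable_exp])
  then have "eventually (\<lambda>m. inverse (fact m) * z ^ m < 1 / z) sequentially"
    using assms by (intro order_tendstoD(2)) auto
  then show ?thesis
  proof eventually_elim
    case (elim m)
    then show ?case
      using assms by (simp add: field_simps)
  qed
qed

lemma fact_le_Gamma:
  assumes "m \<ge> 1" "real m \<le> y"
  shows "fact m \<le> Gamma (y + 1)"
proof -
  have "fact m = Gamma (real m + 1)"
    using Gamma_fact[of m, where 'a=real] by (simp add: add.commute)
  also have "\<dots> \<le> Gamma (y + 1)"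
    using assms Gamma_real_strict_mono[of "real m + 1" "y + 1"] by (cases "real m = y") auto
  finally show ?thesis .
qed

lemma summable_mittag_leffler_series:
  assumes a: "0 < a" and x: "0 \<le> x"
  shows "summable (\<lambda>k. x ^ k / Gamma (a * real k + 1))"
proof (rule summable_comparison_test_ev)
  show "summable (\<lambda>k. (1/2::real) ^ k)"
    by (rule summable_geometric) simp
  define Y where "Y = max 1 (2 * x)"
  define z where "z = Y powr (1 / a)"
  have Y: "1 \<le> Y" and z: "1 \<le> z"
    using a by (auto simp: Y_def z_def ge_one_powr_ge_zero)
  obtain N where N: "\<And>m. m \<ge> N \<Longrightarrow> z ^ Suc m \<le> fact m"
    using eventually_power_Suc_le_fact[OF z] by (auto simp: eventually_sequentially)
  show "eventually (\<lambda>k. norm (x ^ k / Gamma (a * real k + 1)) \<le> (1/2) ^ k) sequentially"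
  proof (rule eventually_sequentiallyI)
    fix k assume k: "nat \<lceil>(real N + 1) / a\<rceil> \<le> k"
    define m where "m = nat \<lfloor>a * real k\<rfloor>"
    have "(real N + 1) / a \<le> real k"
      using k by linarith
    then have ak: "real N + 1 \<le> a * real k"
      using a by (simp add: field_simps)
    then have m: "N + 1 \<le> m" "real m \<le> a * real k" "a * real k < real m + 1"
      unfolding m_def by linarith+
    have "(2 * x) ^ k \<le> Y ^ k"
      using x by (intro power_mono) (auto simp: Y_def)
    also have "\<dots> = Y powr real k"
      using Y by (simp add: powr_realpow)
    also have "\<dots> \<le> Y powr ((real m + 1) / a)"
      using Y m a by (intro powr_mono) (auto simp: field_simps)
    also have "\<dots> = z powr real (Suc m)"
      unfolding z_def powr_powr by (simp add: add.commute)
    also have "\<dots> = z ^ Suc m"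
      by (rule powr_realpow) (use z in simp)
    also have "\<dots> \<le> fact m"
      using N m by simp
    also have "\<dots> \<le> Gamma (a * real k + 1)"
      using m by (intro fact_le_Gamma) auto
    finally have "(2 * x) ^ k \<le> Gamma (a * real k + 1)" .
    moreover have "0 < Gamma (a * real k + 1)"
      using a by (intro Gamma_real_pos add_nonneg_pos) auto
    ultimately show "norm (x ^ k / Gamma (a * real k + 1)) \<le> (1/2) ^ k"
      using x by (simp add: divide_le_eq power_mult_distrib power_divide field_simps)
  qed
qed

definition ml_coeff :: "real \<Rightarrow> nat \<Rightarrow> nat \<Rightarrow> real" where
  "ml_coeff a n k = pochhammer (a * real k + 1) n / pochhammer (real k + 1) n"

definition ml_approx :: "real \<Rightarrow> nat \<Rightarrow> real \<Rightarrow> real" where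
  "ml_approx a n = exp_series_weighted (ml_coeff a n)"

lemma ml_coeff_0: "ml_coeff a 0 = (\<lambda>_. 1)"
  by (simp add: ml_coeff_def fun_eq_iff)

lemma ml_coeff_Suc:
  "ml_coeff a (Suc n) k = ml_coeff a n k * (a + (1 - a) * (real (Suc n) / (real k + real (Suc n))))"
proof -
  have "(a * real k + 1 + real n) / (real k + 1 + real n)
        = a + (1 - a) * (real (Suc n) / (real k + real (Suc n)))"
    by (simp add: field_simps)
  then show ?thesis
    by (simp only: ml_coeff_def pochhammer_Suc times_divide_times_eq[symmetric])
qed

lemma ml_coeff_pos: "0 \<le> a \<Longrightarrow> 0 < ml_coeff a n k"
  unfolding ml_coeff_def by (intro divide_pos_pos pochhammer_pos) (auto intro!: add_nonneg_pos)

lemma ml_coeff_le_1: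
  assumes "0 \<le> a" "a \<le> 1"
  shows "ml_coeff a n k \<le> 1"
proof -
  have "a * real k \<le> real k"
    using assms by (simp add: mult_left_le_one_le)
  then have "pochhammer (a * real k + 1) n \<le> pochhammer (real k + 1) n"
    unfolding pochhammer_prod using assms by (intro prod_mono) auto
  moreover have "0 < pochhammer (real k + 1) n"
    by (intro pochhammer_pos) auto
  ultimately show ?thesis
    unfolding ml_coeff_def by (simp add: divide_le_eq_1)
qed

lemma abs_ml_coeff_le_1: "0 \<le> a \<Longrightarrow> a \<le> 1 \<Longrightarrow> \<bar>ml_coeff a n k\<bar> \<le> 1"
  using ml_coeff_pos ml_coeff_le_1 by (simp add: abs_of_pos)

lemma ml_approx_0: "ml_approx a 0 y = exp (- y)"
  by (simp add: ml_approx_def ml_coeff_0 exp_series_weighted_one)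

lemma ml_approx_Suc:
  assumes "0 \<le> a" "a \<le> 1"
  shows "ml_approx a (Suc n) y
         = a * ml_approx a n y
           + (1 - a) * integral {0..1} (\<lambda>u. real (Suc n) * u ^ n * ml_approx a n (u * y))"
proof -
  define r where "r k = real (Suc n) / (real k + real (Suc n))" for k
  have c: "\<bar>ml_coeff a n k\<bar> \<le> 1" for k
    using assms by (rule abs_ml_coeff_le_1)
  have d: "\<bar>ml_coeff a n k * r k\<bar> \<le> 1" for k
    using c[of k] unfolding abs_mult r_def by (intro mult_le_one) auto
  have "ml_approx a (Suc n) y
        = exp_series_weighted (\<lambda>k. a * ml_coeff a n k + (1 - a) * (ml_coeff a n k * r k)) y"
    unfolding ml_approx_def ml_coeff_Suc r_def by (simp add: algebra_simps)
  also have "\<dots> = a * ml_approx a n y + (1 - a) * exp_series_weighted (\<lambda>k. ml_coeff a n k * r k) y"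
    unfolding ml_approx_def by (rule exp_series_weighted_lincomb[OF c d])
  also have "exp_series_weighted (\<lambda>k. ml_coeff a n k * r k) y
             = integral {0..1} (\<lambda>u. real (Suc n) * u ^ n * ml_approx a n (u * y))"
    unfolding ml_approx_def r_def
    by (rule integral_unique[symmetric, OF has_integral_exp_series_weighted[OF c]])
  finally show ?thesis .
qed

lemma ml_approx_nonneg_antimono:
  assumes "0 \<le> a" "a \<le> 1"
  shows "(\<forall>y\<ge>0. 0 \<le> ml_approx a n y)
         \<and> (\<forall>y z. 0 \<le> y \<longrightarrow> y \<le> z \<longrightarrow> ml_approx a n z \<le> ml_approx a n y)"
proof (induction n)
  case 0
  then show ?case by (simp add: ml_approx_0)
next
  case (Suc n)
  have int: "(\<lambda>u. real (Suc n) * u ^ n * ml_approx a n (u * y)) integrable_on {0..1}" for y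
    using has_integral_exp_series_weighted[of "ml_coeff a n", OF abs_ml_coeff_le_1[OF assms]]
    unfolding ml_approx_def by blast
  show ?case
  proof (intro conjI allI impI)
    fix y :: real assume y: "0 \<le> y"
    have "0 \<le> integral {0..1} (\<lambda>u. real (Suc n) * u ^ n * ml_approx a n (u * y))"
      using Suc.IH y by (intro integral_nonneg int) auto
    then show "0 \<le> ml_approx a (Suc n) y"
      unfolding ml_approx_Suc[OF assms] using Suc.IH y assms by auto
  next
    fix y z :: real assume yz: "0 \<le> y" "y \<le> z"
    have "integral {0..1} (\<lambda>u. real (Suc n) * u ^ n * ml_approx a n (u * z))
          \<le> integral {0..1} (\<lambda>u. real (Suc n) * u ^ n * ml_approx a n (u * y))"
    proof (intro integral_le int)
      fix u :: real assume u: "u \<in> {0..1}"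
      then have "0 \<le> u * y" "u * y \<le> u * z"
        using yz by (auto intro: mult_left_mono)
      then have "ml_approx a n (u * z) \<le> ml_approx a n (u * y)"
        using Suc.IH by blast
      then show "real (Suc n) * u ^ n * ml_approx a n (u * z)
                 \<le> real (Suc n) * u ^ n * ml_approx a n (u * y)"
        using u by (intro mult_left_mono) auto
    qed
    moreover have "ml_approx a n z \<le> ml_approx a n y"
      using Suc.IH yz by auto
    ultimately show "ml_approx a (Suc n) z \<le> ml_approx a (Suc n) y"
      unfolding ml_approx_Suc[OF assms] using assms by (intro add_mono mult_left_mono) auto
  qed
qed

definition ml_coeff_rescaled :: "real \<Rightarrow> nat \<Rightarrow> nat \<Rightarrow> real" where
  "ml_coeff_rescaled a n k = real (Suc n) powr ((1 - a) * real k) * ml_coeff a (Suc n) k"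

lemma ml_approx_rescaled:
  "ml_approx a (Suc n) (real (Suc n) powr (1 - a) * x) = exp_series_weighted (ml_coeff_rescaled a n) x"
proof -
  have "(- (real (Suc n) powr (1 - a) * x)) ^ k = (real (Suc n) powr (1 - a)) ^ k * (- x) ^ k" for k
    by (metis mult_minus_right power_mult_distrib)
  moreover have "(real (Suc n) powr (1 - a)) ^ k = real (Suc n) powr ((1 - a) * real k)" for k
    by (simp add: powr_realpow[symmetric] powr_powr)
  ultimately have "(- (real (Suc n) powr (1 - a) * x)) ^ k
                   = (- x) ^ k * real (Suc n) powr ((1 - a) * real k)" for k
    by simp
  then show ?thesis
    unfolding ml_approx_def exp_series_weighted_def ml_coeff_rescaled_def by (simp add: mult.assoc)
qed

lemma Gamma_series_ratio_eq_ml_coeff_rescaled: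
  assumes "0 < a" "k \<ge> 1"
  shows "Gamma_series (real k) (Suc n) / Gamma_series (a * real k) (Suc n) = a * ml_coeff_rescaled a n k"
proof -
  define m where "m = real (Suc n)"
  have pos: "0 < real k" "0 < a * real k" "0 < m"
    using assms by (auto simp: m_def)
  have "Gamma_series (real k) (Suc n) / Gamma_series (a * real k) (Suc n)
        = exp (real k * ln m) / exp (a * real k * ln m)
          * (pochhammer (a * real k) (Suc (Suc n)) / pochhammer (real k) (Suc (Suc n)))"
  proof -
    have ratio: "(F * E1 / P1) / (F * E2 / P2) = E1 / E2 * (P2 / P1)"
      if "F \<noteq> 0" "E2 \<noteq> 0" "P1 \<noteq> 0" "P2 \<noteq> 0" for F E1 E2 P1 P2 :: real
      using that by (simp add: field_simps)
    show ?thesis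
      unfolding Gamma_series_def m_def of_real_eq_id id_def Suc_eq_plus1[symmetric]
      using pos pochhammer_pos[of "real k" "Suc (Suc n)"] pochhammer_pos[of "a * real k" "Suc (Suc n)"]
      by (intro ratio) auto
  qed
  also have "exp (real k * ln m) / exp (a * real k * ln m) = m powr ((1 - a) * real k)"
    using pos by (simp add: powr_def exp_diff[symmetric] algebra_simps)
  also have "pochhammer (a * real k) (Suc (Suc n)) / pochhammer (real k) (Suc (Suc n))
             = a * ml_coeff a (Suc n) k"
    using pos unfolding pochhammer_rec[of _ "Suc n"] ml_coeff_def by (simp add: field_simps)
  finally show ?thesis
    unfolding ml_coeff_rescaled_def m_def by simp
qed

lemma Gamma_div_Gamma_eq_fact_div_Gamma:
  assumes "0 < a" "k \<ge> 1"
  shows "Gamma (real k) / Gamma (a * real k) / a = fact k / Gamma (a * real k + 1)"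
proof -
  have pos: "0 < real k" "0 < a * real k"
    using assms by auto
  have not_nonpos_Int: "x \<notin> \<int>\<^sub>\<le>\<^sub>0" if "0 < x" for x :: real
    using that nonpos_Ints_nonpos by force
  have "Gamma (a * real k + 1) = a * real k * Gamma (a * real k)"
    using pos by (intro Gamma_plus1 not_nonpos_Int)
  moreover have "fact k = real k * Gamma (real k)"
  proof -
    have "Gamma (1 + real k) = (fact k :: real)"
      by (rule Gamma_fact)
    then show ?thesis
      using Gamma_plus1[OF not_nonpos_Int[of "real k"]] pos by (simp add: add.commute)
  qed
  ultimately show ?thesis
    using pos Gamma_real_pos[of "a * real k"] by (simp add: field_simps)
qed

lemma ml_coeff_rescaled_LIMSEQ:
  assumes "0 < a"
  shows "(\<lambda>n. ml_coeff_rescaled a n k) \<longlonglongrightarrow> fact k / Gamma (a * real k + 1)"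
proof (cases "k = 0")
  case True
  then show ?thesis
    using pochhammer_pos[of "1::real"] by (simp add: ml_coeff_rescaled_def ml_coeff_def less_imp_neq[symmetric])
next
  case False
  then have k: "k \<ge> 1" by simp
  have "Gamma (a * real k) \<noteq> 0"
    using assms k by (intro less_imp_neq[symmetric] Gamma_real_pos) simp
  then have "(\<lambda>n. Gamma_series (real k) (Suc n) / Gamma_series (a * real k) (Suc n) / a)
        \<longlonglongrightarrow> Gamma (real k) / Gamma (a * real k) / a"
    using assms
    by (intro tendsto_divide LIMSEQ_Suc[OF Gamma_series_LIMSEQ] tendsto_const) simp_all
  then show ?thesis
    using assms
    unfolding Gamma_div_Gamma_eq_fact_div_Gamma[OF assms k]
      Gamma_series_ratio_eq_ml_coeff_rescaled[OF assms k]
    by simp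
qed

lemma powr_one_plus_inverse_ge:
  fixes m s :: real
  assumes "0 < m" "0 \<le> s"
  shows "1 + s / (m + 1) \<le> ((m + 1) / m) powr s"
proof -
  have "1 / (m + 1) \<le> ln ((m + 1) / m)"
    using ln_le_minus_one[of "m / (m + 1)"] assms by (simp add: ln_div field_simps)
  then have "1 + s / (m + 1) \<le> 1 + s * ln ((m + 1) / m)"
    using mult_left_mono[OF _ assms(2)] by fastforce
  also have "\<dots> \<le> ((m + 1) / m) powr s"
    using assms exp_ge_add_one_self[of "s * ln ((m + 1) / m)"] by (simp add: powr_def mult.commute)
  finally show ?thesis .
qed

lemma ml_coeff_rescaled_le_Suc:
  assumes "0 \<le> a" "a \<le> 1"
  shows "ml_coeff_rescaled a n k \<le> ml_coeff_rescaled a (Suc n) k"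
proof -
  define m where "m = real (Suc n)"
  define s where "s = (1 - a) * real k"
  have m: "0 < m" and s: "0 \<le> s" and ak: "0 \<le> a * real k"
    using assms by (auto simp: m_def s_def)
  have "(real k + m + 1) / (a * real k + m + 1) = 1 + s / (a * real k + m + 1)"
    using m ak by (simp add: s_def field_simps)
  also have "\<dots> \<le> 1 + s / (m + 1)"
    using m s ak by (intro add_left_mono divide_left_mono) auto
  also have "\<dots> \<le> ((m + 1) / m) powr s"
    using m s by (rule powr_one_plus_inverse_ge)
  finally have "m powr s * ((real k + m + 1) / (a * real k + m + 1)) \<le> m powr s * ((m + 1) / m) powr s"
    by (rule mult_left_mono) simp
  also have "\<dots> = (m + 1) powr s"
    using m by (simp add: powr_divide)
  finally have "m powr s \<le> (m + 1) powr s * ((a * real k + m + 1) / (real k + m + 1))"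
    using m ak by (simp add: field_simps)
  also have "(a * real k + m + 1) / (real k + m + 1) = a + (1 - a) * ((m + 1) / (real k + (m + 1)))"
    using m ak by (simp add: field_simps)
  finally have "m powr s * ml_coeff a (Suc n) k
      \<le> (m + 1) powr s * (a + (1 - a) * ((m + 1) / (real k + (m + 1)))) * ml_coeff a (Suc n) k"
    using ml_coeff_pos[OF assms(1), of "Suc n" k] by (simp add: mult_right_mono)
  moreover have "real (Suc (Suc n)) = m + 1"
    by (simp add: m_def)
  ultimately show ?thesis
    unfolding ml_coeff_rescaled_def ml_coeff_Suc[of a "Suc n"] m_def[symmetric] s_def[symmetric]
    by (simp only: ac_simps)
qed

lemma ml_coeff_rescaled_nonneg: "0 \<le> a \<Longrightarrow> 0 \<le> ml_coeff_rescaled a n k"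
  unfolding ml_coeff_rescaled_def using ml_coeff_pos[of a] by (simp add: less_imp_le)

lemma ml_coeff_rescaled_le:
  assumes "0 < a" "a \<le> 1"
  shows "ml_coeff_rescaled a n k \<le> fact k / Gamma (a * real k + 1)"
proof (rule incseq_le[OF _ ml_coeff_rescaled_LIMSEQ[OF assms(1)]])
  show "incseq (\<lambda>n. ml_coeff_rescaled a n k)"
    using assms by (intro incseq_SucI ml_coeff_rescaled_le_Suc) auto
qed

lemma ml_approx_rescaled_LIMSEQ:
  assumes a: "0 < a" "a \<le> 1" and x: "0 \<le> x"
  shows "(\<lambda>n. ml_approx a (Suc n) (real (Suc n) powr (1 - a) * x)) \<longlonglongrightarrow> mittag_leffler a 1 (- x)"
proof -
  have "mittag_leffler a 1 (- x) = exp_series_weighted (\<lambda>k. fact k / Gamma (a * real k + 1)) x"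
    by (simp add: mittag_leffler_def exp_series_weighted_def)
  moreover have "(\<lambda>n. exp_series_weighted (ml_coeff_rescaled a n) x)
      \<longlonglongrightarrow> exp_series_weighted (\<lambda>k. fact k / Gamma (a * real k + 1)) x"
  proof (rule tendsto_exp_series_weighted)
    show "(\<lambda>n. ml_coeff_rescaled a n k) \<longlonglongrightarrow> fact k / Gamma (a * real k + 1)" for k
      using a(1) by (rule ml_coeff_rescaled_LIMSEQ)
    show "\<bar>ml_coeff_rescaled a n k\<bar> \<le> fact k / Gamma (a * real k + 1)" for n k
      using a ml_coeff_rescaled_nonneg[of a n k] ml_coeff_rescaled_le[OF a, of n k] by simp
    show "summable (\<lambda>k. \<bar>x\<bar> ^ k * (fact k / Gamma (a * real k + 1)) / fact k)"
      using summable_mittag_leffler_series[OF a(1) x] x by simp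
  qed
  ultimately show ?thesis
    unfolding ml_approx_rescaled by simp
qed

lemma mittag_leffler_neg_nonneg:
  assumes "0 < a" "a \<le> 1" "0 \<le> x"
  shows "0 \<le> mittag_leffler a 1 (- x)"
  using ml_approx_nonneg_antimono[of a] assms
  by (intro LIMSEQ_le_const[OF ml_approx_rescaled_LIMSEQ[OF assms]]) auto

lemma mittag_leffler_neg_antimono:
  assumes a: "0 < a" "a \<le> 1" and x: "0 \<le> x" "x \<le> y"
  shows "mittag_leffler a 1 (- y) \<le> mittag_leffler a 1 (- x)"
proof (rule LIMSEQ_le[OF ml_approx_rescaled_LIMSEQ[OF a] ml_approx_rescaled_LIMSEQ[OF a]])
  show "\<exists>N. \<forall>n\<ge>N. ml_approx a (Suc n) (real (Suc n) powr (1 - a) * y)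
                   \<le> ml_approx a (Suc n) (real (Suc n) powr (1 - a) * x)"
    using ml_approx_nonneg_antimono[of a] a x by (auto intro!: mult_left_mono)
qed (use x in auto)

lemma mono_on_mittag_leffler_kernel:
  assumes "0 < a" "a \<le> 1" "0 \<le> c"
  shows "mono_on {..t} (\<lambda>y. mittag_leffler a 1 (- c * (t - y) powr a))"
proof (rule mono_onI)
  fix x y assume "x \<in> {..t}" "y \<in> {..t}" "x \<le> y"
  then have "c * (t - y) powr a \<le> c * (t - x) powr a"
    using assms by (intro mult_left_mono powr_mono2) auto
  then show "mittag_leffler a 1 (- c * (t - x) powr a) \<le> mittag_leffler a 1 (- c * (t - y) powr a)"
    using assms mittag_leffler_neg_antimono[of a "c * (t - y) powr a" "c * (t - x) powr a"] by simp
qed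

section \<open>Monotone kernels and the ABC derivative\<close>

lemma integrable_on_mono_on_mult:
  fixes W k :: "real \<Rightarrow> real"
  assumes "k integrable_on {a..b}" "mono_on {a..b} W"
  shows "(\<lambda>x. W x * k x) integrable_on {a..b}"
proof (cases "a \<le> b")
  case True
  have "W x \<le> W y" if "a \<le> x" "x \<le> y" "y \<le> b" for x y
    using assms(2) that by (auto intro: mono_onD)
  then show ?thesis
    using second_mean_value_theorem_full[OF assms(1) True, of W] by blast
qed auto

lemma integral_mono_on_mult_nonpos:
  fixes W k F :: "real \<Rightarrow> real"
  assumes k: "k integrable_on {a..b}" and "a \<le> b"
    and W: "mono_on {a..b} W" "0 \<le> W a"
    and F: "\<And>y. y \<in> {a..b} \<Longrightarrow> F y = F a + integral {a..y} k"
    and min: "\<And>y. y \<in> {a..b} \<Longrightarrow> F b \<le> F y"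
  shows "integral {a..b} (\<lambda>x. W x * k x) \<le> 0"
proof -
  have "W x \<le> W y" if "a \<le> x" "x \<le> y" "y \<le> b" for x y
    using W(1) that by (auto intro: mono_onD)
  then obtain c where c: "c \<in> {a..b}"
    and I: "((\<lambda>x. W x * k x) has_integral (W a * integral {a..c} k + W b * integral {c..b} k)) {a..b}"
    using second_mean_value_theorem_full[OF k \<open>a \<le> b\<close>, of W] by blast
  have "integral {a..c} k + integral {c..b} k = integral {a..b} k"
    using c by (intro Henstock_Kurzweil_Integration.integral_combine k) auto
  then have ac: "integral {a..c} k = F c - F a" and cb: "integral {c..b} k = F b - F c"
    using F[OF c] F[of b] \<open>a \<le> b\<close> by auto
  have "integral {a..b} (\<lambda>x. W x * k x) = W a * integral {a..c} k + W b * integral {c..b} k"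
    using I by (rule integral_unique)
  also have "\<dots> = W a * (F b - F a) + (W b - W a) * (F b - F c)"
    unfolding ac cb by (simp add: algebra_simps)
  also have "\<dots> \<le> 0"
    using W mono_onD[OF W(1), of a b] min[OF c] min[of a] c \<open>a \<le> b\<close>
    by (intro add_nonpos_nonpos mult_nonneg_nonpos) auto
  finally show ?thesis .
qed

lemma integral_mittag_leffler_kernel_nonpos:
  fixes k F :: "real \<Rightarrow> real"
  assumes "0 < a" "a \<le> 1" "0 \<le> c" "0 \<le> t" "k integrable_on {0..t}"
    and "\<And>y. y \<in> {0..t} \<Longrightarrow> F y = F 0 + integral {0..y} k"
    and "\<And>y. y \<in> {0..t} \<Longrightarrow> F t \<le> F y"
  shows "integral {0..t} (\<lambda>y. mittag_leffler a 1 (- c * (t - y) powr a) * k y) \<le> 0"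
proof (rule integral_mono_on_mult_nonpos)
  show "mono_on {0..t} (\<lambda>y. mittag_leffler a 1 (- c * (t - y) powr a))"
    by (rule mono_on_subset[OF mono_on_mittag_leffler_kernel]) (use assms(1-3) in auto)
  show "0 \<le> mittag_leffler a 1 (- c * (t - 0) powr a)"
    using mittag_leffler_neg_nonneg[of a "c * t powr a"] assms(1-4) by simp
qed (fact assms)+

lemma H1_deriv_integrable_on:
  assumes "H1_deriv T f g" "{a..b} \<subseteq> {0..T}"
  shows "g integrable_on {a..b}"
proof -
  have "g absolutely_integrable_on {0..T}"
    using assms(1) by (simp add: H1_deriv_def)
  then have "g integrable_on {0..T}"
    by (rule set_lebesgue_integral_eq_integral(1))
  then show ?thesis
    using assms(2) by (rule integrable_on_subinterval)
qed

lemma H1_deriv_integral: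
  assumes "H1_deriv T f g" "t \<in> {0..T}"
  shows "integral {0..t} g = f t - f 0"
proof -
  have "f t = f 0 + integral {0..t} g"
    using assms unfolding H1_deriv_def by blast
  then show ?thesis
    by linarith
qed

lemma H1_deriv_integral_lincomb:
  assumes "H1_deriv T u g" "H1_deriv T v h" "y \<in> {0..T}"
  shows "integral {0..y} (\<lambda>x. r * h x - s * g x) = (r * v y - s * u y) - (r * v 0 - s * u 0)"
proof -
  have "{0..y} \<subseteq> {0..T}"
    using assms(3) by auto
  then have "g integrable_on {0..y}" "h integrable_on {0..y}"
    using assms(1,2) by (auto intro: H1_deriv_integrable_on)
  then have "integral {0..y} (\<lambda>x. r * h x - s * g x) = r * integral {0..y} h - s * integral {0..y} g"
    by (simp add: integral_diff integrable_on_mult_right)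
  also have "\<dots> = r * (v y - v 0) - s * (u y - u 0)"
    using H1_deriv_integral[OF assms(1,3)] H1_deriv_integral[OF assms(2,3)] by simp
  finally show ?thesis
    by (simp add: algebra_simps)
qed

lemma ABC_deriv_eq_integral:
  assumes "in_H1 T f"
  obtains g where "H1_deriv T f g"
    and "ABC_deriv T a f t
         = B_norm a / (1 - a)
           * integral {0..t} (\<lambda>y. g y * mittag_leffler a 1 (- gamma_par a * (t - y) powr a))"
proof
  show "H1_deriv T f (SOME g. H1_deriv T f g)"
    using assms unfolding in_H1_def by (rule someI_ex)
qed (simp add: ABC_deriv_def)

lemma ABC_deriv_lincomb_le:
  assumes a: "0 < a" "a < 1" and t: "0 < t" "t < T" and "in_H1 T u" "in_H1 T v"
    and min: "\<And>y. y \<in> {0..t} \<Longrightarrow> r * v t - s * u t \<le> r * v y - s * u y"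
  shows "r * ABC_deriv T a v t \<le> s * ABC_deriv T a u t"
proof -
  define W where "W y = mittag_leffler a 1 (- gamma_par a * (t - y) powr a)" for y
  obtain g where g: "H1_deriv T u g"
    and Du: "ABC_deriv T a u t = B_norm a / (1 - a) * integral {0..t} (\<lambda>y. g y * W y)"
    using ABC_deriv_eq_integral[OF \<open>in_H1 T u\<close>] unfolding W_def by blast
  obtain h where h: "H1_deriv T v h"
    and Dv: "ABC_deriv T a v t = B_norm a / (1 - a) * integral {0..t} (\<lambda>y. h y * W y)"
    using ABC_deriv_eq_integral[OF \<open>in_H1 T v\<close>] unfolding W_def by blast
  have "0 < gamma_par a" and c0: "0 < B_norm a / (1 - a)"
    using a Gamma_real_pos[of a]
    by (auto simp: gamma_par_def B_norm_def intro!: divide_pos_pos add_pos_pos)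
  have "{0..t} \<subseteq> {0..T}"
    using t by auto
  then have gi: "g integrable_on {0..t}" and hi: "h integrable_on {0..t}"
    using g h by (auto intro: H1_deriv_integrable_on)
  have "mono_on {0..t} W"
    unfolding W_def
    by (rule mono_on_subset[OF mono_on_mittag_leffler_kernel]) (use a \<open>0 < gamma_par a\<close> in auto)
  then have "(\<lambda>y. W y * h y) integrable_on {0..t}" "(\<lambda>y. W y * g y) integrable_on {0..t}"
    using gi hi by (auto intro: integrable_on_mono_on_mult)
  then have "r * integral {0..t} (\<lambda>y. h y * W y) - s * integral {0..t} (\<lambda>y. g y * W y)
             = integral {0..t} (\<lambda>y. W y * (r * h y - s * g y))"
    by (simp add: algebra_simps integral_diff integrable_on_mult_right)
  also have "\<dots> \<le> 0"
    unfolding W_def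
  proof (rule integral_mittag_leffler_kernel_nonpos[where F = "\<lambda>y. r * v y - s * u y"])
    show "r * v y - s * u y = r * v 0 - s * u 0 + integral {0..y} (\<lambda>y. r * h y - s * g y)"
      if "y \<in> {0..t}" for y
      using H1_deriv_integral_lincomb[OF g h, of y r s] that t by auto
  qed (use a t min gi hi \<open>0 < gamma_par a\<close> in \<open>auto intro: integrable_diff integrable_on_mult_right\<close>)
  finally have "B_norm a / (1 - a) * (r * integral {0..t} (\<lambda>y. h y * W y))
                \<le> B_norm a / (1 - a) * (s * integral {0..t} (\<lambda>y. g y * W y))"
    using c0 by (intro mult_left_mono) auto
  then show ?thesis
    unfolding Du Dv by (simp only: ac_simps)
qed

section \<open>Young's inequality for \<open>\<Phi>\<^sub>p\<close>\<close>

lemma Phi_p_mult_self: "Phi_p p x * x = \<bar>x\<bar> powr p"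
proof -
  have "Phi_p p x * x = \<bar>x\<bar> * (\<bar>x\<bar> * \<bar>x\<bar> powr (p - 2))"
    by (simp add: Phi_p_def abs_mult_self_eq ac_simps)
  also have "\<dots> = \<bar>x\<bar> powr p"
    by (simp add: powr_mult_base)
  finally show ?thesis .
qed

lemma Young_inequality_Phi_p:
  assumes p: "1 < p"
  shows "y * Phi_p p x \<le> \<bar>y\<bar> powr p / p + (p - 1) / p * \<bar>x\<bar> powr p"
proof -
  define q where "q = p / (p - 1)"
  have q: "1 < q" "1 / p + 1 / q = 1"
    using p by (auto simp: q_def field_simps)
  have "y * Phi_p p x \<le> \<bar>y * Phi_p p x\<bar>"
    by (rule abs_ge_self)
  also have "\<dots> = \<bar>y\<bar> * (\<bar>x\<bar> * \<bar>x\<bar> powr (p - 2))"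
    by (simp add: Phi_p_def abs_mult)
  also have "\<bar>x\<bar> * \<bar>x\<bar> powr (p - 2) = \<bar>x\<bar> powr (p - 1)"
    by (simp add: powr_mult_base)
  also have "\<bar>y\<bar> * \<bar>x\<bar> powr (p - 1) \<le> \<bar>y\<bar> powr p / p + (\<bar>x\<bar> powr (p - 1)) powr q / q"
    using p q by (intro Youngs_inequality) auto
  also have "(\<bar>x\<bar> powr (p - 1)) powr q / q = (p - 1) / p * \<bar>x\<bar> powr p"
    using p by (simp add: powr_powr q_def)
  finally show ?thesis .
qed

lemma Phi_p_potential_min:
  assumes "1 < p"
  shows "(p - 1) / p * (Phi_p p y * y) - y * Phi_p p y \<le> (p - 1) / p * (Phi_p p x * x) - y * Phi_p p x"
proof -
  have "(p - 1) / p * \<bar>y\<bar> powr p - \<bar>y\<bar> powr p = - (\<bar>y\<bar> powr p / p)"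
    using assms by (simp add: field_simps)
  then show ?thesis
    using Young_inequality_Phi_p[OF assms, of y x] Phi_p_mult_self[of p]
    by (simp add: mult.commute[of y])
qed

theorem lemma3:
  fixes T a p :: real and \<phi> :: "real \<Rightarrow> real" and t :: real
  assumes "T > 0" and "0 < a" and "a < 1" and "2 \<le> p"
    and "continuous_on {0..T} \<phi>" and "bounded (\<phi> ` {0..T})"
    and "in_H1 T (\<lambda>s. Phi_p p (\<phi> s))"
    and "in_H1 T (\<lambda>s. Phi_p p (\<phi> s) * \<phi> s)"
    and "t \<in> {0<..<T}"
  shows "ABC_deriv T a (\<lambda>s. Phi_p p (\<phi> s)) t * \<phi> t
         \<ge> (p - 1) / p * ABC_deriv T a (\<lambda>s. Phi_p p (\<phi> s) * \<phi> s) t"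
proof -
  have "(p - 1) / p * ABC_deriv T a (\<lambda>s. Phi_p p (\<phi> s) * \<phi> s) t
        \<le> \<phi> t * ABC_deriv T a (\<lambda>s. Phi_p p (\<phi> s)) t"
    using assms by (intro ABC_deriv_lincomb_le Phi_p_potential_min) auto
  then show ?thesis
    by (simp add: mult.commute)
qed

end
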